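(* Let $X$ be a metric space, $K$ a reproducing kernel on $X$ with RKHS $\mathcal{H}_K$, $\Omega\subseteq X$ compact with $K$ continuous on $\Omega\times\Omega$, and $\mu$ a finite positive Borel measure on $\Omega$. Let $T$ be the positive compact operator on $\mathcal{H}_K$ given by $(Tf)(x)=\int_\Omega f(t)K(t,x)\,d\mu(t)$, let $e_1,\dots,e_n$ be orthonormal eigenfunctions of $T$ corresponding to its $n$ largest eigenvalues, assumed positive, and $\mathcal{S}_T:=\operatorname{span}\{e_1,\dots,e_n\}$. Let $\mathcal{X}=\{x_1,\dots,x_n\}\subseteq X$ with $K[\mathcal{X}]:=[K(x_j,x_k)]_{j,k=1}^n$ nonsingular, and $\mathcal{S}_{\mathcal{X}}:=\operatorname{span}\{K(x_j,\cdot):1\le j\le n\}$. Define $f_j:=\sum_{k=1}^n\overline{e_k(x_j)}\,e_k$ (the orthogonal projection of $K(x_j,\cdot)$ onto $\mathcal{S}_T$), $h_j:=K(x_j,\cdot)-f_j$, $\mathbf{A}:=[(f_k,f_j)_{\mathcal{H}_K}]_{j,k=1}^n$, $\mathbf{B}:=[(h_k,h_j)_{\mathcal{H}_K}]_{j,k=1}^n$, and $\mathbf{E}:=[e_k(x_j)]_{j,k=1}^n$. Assume $\mathbf{B}$ is nonsingular. If $\mathbf{E}$ is nonsingular, then $$\operatorname{dist}(\mathcal{S}_{\mathcal{X}},\mathcal{S}_T)=\sqrt{1-\frac{1}{\lambda_{\max}\big(K[\mathcal{X}]^T(\mathbf{E}\mathbf{E}^* )^{-1}\big)}},$$ where $\lambda_{\max}(M)$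 is the largest eigenvalue of $M$. If $\mathbf{E}$ is singular, then $\operatorname{dist}(\mathcal{S}_{\mathcal{X}},\mathcal{S}_T)\ge 1$.
   Context: The RKHS $\mathcal{H}_K$ satisfies $f(x)=(f,K(x,\cdot))_{\mathcal{H}_K}$ for all $f\in\mathcal{H}_K$, $x\in X$. For closed subspaces $U,V$ with orthogonal projections $P_U,P_V$, $\operatorname{dist}(U,V):=\|P_U-P_V\|$ (operator norm). $M^T$ is the transpose and $M^*$ the conjugate transpose of $M$. Note $\mathbf{A}=\mathbf{E}\mathbf{E}^*$ and $\mathbf{A}+\mathbf{B}=K[\mathcal{X}]^T$. *)

theory Defs
  imports "HOL-Analysis.Analysis"
begin

text \<open>An abstract inner product ip on a set H of such functions; conventions:
  ip is linear in the first and conjugate-linear in the second argument.\<close>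

definition hnorm :: "(('x \<Rightarrow> complex) \<Rightarrow> ('x \<Rightarrow> complex) \<Rightarrow> complex) \<Rightarrow> ('x \<Rightarrow> complex) \<Rightarrow> real" where
  "hnorm ip f = sqrt (Re (ip f f))"

definition rkhs :: "('x \<Rightarrow> complex) set \<Rightarrow> (('x \<Rightarrow> complex) \<Rightarrow> ('x \<Rightarrow> complex) \<Rightarrow> complex)
                    \<Rightarrow> ('x \<Rightarrow> 'x \<Rightarrow> complex) \<Rightarrow> bool" where
  "rkhs H ip K \<longleftrightarrow>
     (\<lambda>t. 0) \<in> H
   \<and> (\<forall>f\<in>H. \<forall>g\<in>H. (\<lambda>t. f t + g t) \<in> H)
   \<and> (\<forall>c. \<forall>f\<in>H. (\<lambda>t. c * f t) \<in> H)
   \<and> (\<forall>f\<in>H. \<forall>g\<in>H. \<forall>h\<in>H. ip (\<lambda>t. f t + g t) h = ip f h + ip g h)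
   \<and> (\<forall>c. \<forall>f\<in>H. \<forall>g\<in>H. ip (\<lambda>t. c * f t) g = c * ip f g)
   \<and> (\<forall>f\<in>H. \<forall>g\<in>H. ip g f = cnj (ip f g))
   \<and> (\<forall>f\<in>H. 0 \<le> Re (ip f f) \<and> (ip f f = 0 \<longrightarrow> f = (\<lambda>t. 0)))
   \<and> (\<forall>s. (\<forall>i. s i \<in> H) \<and> (\<forall>\<epsilon>>0. \<exists>N. \<forall>m\<ge>N. \<forall>k\<ge>N. hnorm ip (\<lambda>t. s m t - s k t) < \<epsilon>)
          \<longrightarrow> (\<exists>f\<in>H. (\<lambda>i. hnorm ip (\<lambda>t. s i t - f t)) \<longlonglongrightarrow> 0))
   \<and> (\<forall>x. K x \<in> H)
   \<and> (\<forall>f\<in>H. \<forall>x. f x = ip f (K x))"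

definition Top :: "'x measure \<Rightarrow> ('x \<Rightarrow> 'x \<Rightarrow> complex) \<Rightarrow> ('x \<Rightarrow> complex) \<Rightarrow> ('x \<Rightarrow> complex)" where
  "Top M K f = (\<lambda>x. integral\<^sup>L M (\<lambda>t. f t * K t x))"

definition fspan :: "('i::finite \<Rightarrow> 'x \<Rightarrow> complex) \<Rightarrow> ('x \<Rightarrow> complex) set" where
  "fspan g = {(\<lambda>t. \<Sum>i\<in>UNIV. c i * g i t) | c. True}"

definition hproj :: "(('x \<Rightarrow> complex) \<Rightarrow> ('x \<Rightarrow> complex) \<Rightarrow> complex) \<Rightarrow> ('x \<Rightarrow> complex) set
                     \<Rightarrow> ('x \<Rightarrow> complex) \<Rightarrow> ('x \<Rightarrow> complex)" where
  "hproj ip U f = (THE u. u \<in> U \<and> (\<forall>w\<in>U. ip (\<lambda>t. f t - u t) w = 0))"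

definition subdist :: "('x \<Rightarrow> complex) set \<Rightarrow> (('x \<Rightarrow> complex) \<Rightarrow> ('x \<Rightarrow> complex) \<Rightarrow> complex)
                       \<Rightarrow> ('x \<Rightarrow> complex) set \<Rightarrow> ('x \<Rightarrow> complex) set \<Rightarrow> real" where
  "subdist H ip U V = Sup {hnorm ip (\<lambda>t. hproj ip U f t - hproj ip V f t) | f. f \<in> H \<and> hnorm ip f \<le> 1}"

definition cnj_transpose :: "complex^'n^'m \<Rightarrow> complex^'m^'n" where
  "cnj_transpose M = (\<chi> i j. cnj (M $ j $ i))"

text \<open>Largest eigenvalue (the eigenvalues of the matrices in question are real).\<close>
definition lambda_max :: "complex^'n^'n \<Rightarrow> real" where
  "lambda_max M = Max {r::real. \<exists>v. v \<noteq> 0 \<and> M *v v = complex_of_real r *s v}"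

end

theory Submission
  imports Defs "HOL-Computational_Algebra.Polynomial"
begin

text \<open>
  U = span of the kernel sections K(x_j,.) and V = span of the orthonormal e_k are n-dimensional
  subspaces of the RKHS.  If
  |P_V u|^2 >= mu |u|^2 on U and |P_U v|^2 >= mu |v|^2 on V then |P_U - P_V| <= sqrt(1 - mu);
  each nonzero u in U gives |P_U - P_V| >= sqrt(1 - |P_V u|^2/|u|^2); and a minimiser u0 of this
  Rayleigh quotient satisfies (P_V u0, P_V w) = mu (u0, w) on U.  The kernel setting then takes
  mu to be the minimal Rayleigh quotient (attained by compactness in coefficient space);
  stationarity tested against the kernel sections reads (E E^* ) c = mu K[X]^T c, so 1/mu is the
  largest eigenvalue of K[X]^T (E E^* )^-1.  For invertible E, P_V maps U onto V, the bound
  transfers to V and dist(U,V) = sqrt(1 - mu); for singular E some nonzero u in U is orthogonal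
  to V, so dist(U,V) >= 1.
\<close>

section \<open>Matrix facts\<close>

lemma invertible_kernel_zero:
  fixes A :: "'a::field^'n^'n"
  assumes "invertible A" "A *v v = 0"
  shows "v = 0"
  using assms invertible_left_inverse matrix_left_invertible_ker by metis

lemma singular_kernel_nonzero:
  fixes A :: "'a::field^'n^'n"
  assumes "\<not> invertible A"
  obtains v where "v \<noteq> 0" "A *v v = 0"
  using assms invertible_left_inverse matrix_left_invertible_ker by metis

lemma matrix_inv_inverse:
  fixes A :: "'a::field^'n^'n"
  assumes "invertible A"
  shows "A ** matrix_inv A = mat 1" "matrix_inv A ** A = mat 1"
proof -
  have "\<exists>A'. A ** A' = mat 1 \<and> A' ** A = mat 1" using assms invertible_def by blast
  from someI_ex[OF this] show "A ** matrix_inv A = mat 1" "matrix_inv A ** A = mat 1"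
    unfolding matrix_inv_def by auto
qed

lemma invertible_matrix_inv:
  fixes A :: "'a::field^'n^'n"
  assumes "invertible A"
  shows "invertible (matrix_inv A)"
  using matrix_inv_inverse[OF assms] invertible_def by blast

lemma invertible_transpose:
  fixes A :: "'a::field^'n^'n"
  assumes "invertible A"
  shows "invertible (transpose A)"
  by (meson assms invertible_def matrix_left_right_inverse right_invertible_transpose)

lemma cnj_transpose_mult:
  "cnj_transpose (X ** Y) = cnj_transpose Y ** cnj_transpose (X::complex^'n^'n)"
  unfolding cnj_transpose_def matrix_matrix_mult_def
  by (simp add: vec_eq_iff mult.commute)

lemma cnj_transpose_mat1: "cnj_transpose (mat 1 :: complex^'n^'n) = mat 1"
  unfolding cnj_transpose_def mat_def by (simp add: vec_eq_iff)

lemma cnj_transpose_cnj_transpose: "cnj_transpose (cnj_transpose A) = A"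
  by (simp add: cnj_transpose_def vec_eq_iff)

lemma invertible_cnj_transpose:
  fixes A :: "complex^'n^'n"
  assumes "invertible A"
  shows "invertible (cnj_transpose A)"
proof -
  obtain B where "A ** B = mat 1" "B ** A = mat 1" using assms invertible_def by blast
  then have "cnj_transpose A ** cnj_transpose B = mat 1" "cnj_transpose B ** cnj_transpose A = mat 1"
    by (metis cnj_transpose_mult cnj_transpose_mat1)+
  then show ?thesis using invertible_def by blast
qed

lemma invertible_cnj_transpose_iff:
  "invertible (cnj_transpose A) \<longleftrightarrow> invertible (A :: complex^'n^'n)"
  using invertible_cnj_transpose cnj_transpose_cnj_transpose by metis

text \<open>An invertible matrix has only finitely many real eigenvalues: they are roots of the
  characteristic polynomial, which is nonzero since it does not vanish at 0.  This makes
  the maximum in lambda_max well defined.\<close>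

lemma poly_det:
  fixes N :: "'a::comm_ring_1 poly^'n^'n"
  shows "poly (det N) z = det (\<chi> i j. poly (N$i$j) z)"
  unfolding det_def by (simp add: poly_sum poly_prod)

lemma finite_real_eigenvalues:
  fixes M :: "complex^'n^'n"
  assumes "invertible M"
  shows "finite {r::real. \<exists>v. v \<noteq> 0 \<and> M *v v = complex_of_real r *s v}"
proof -
  define N :: "complex poly^'n^'n" where
    "N = (\<chi> i j. [:M$i$j:] - (if i = j then [:0,1:] else 0))"
  have char_poly: "poly (det N) z = det (M - mat z)" for z
    unfolding poly_det by (rule arg_cong[where f=det]) (simp add: N_def vec_eq_iff mat_def)
  have "det N \<noteq> 0"
    using char_poly[of 0] assms invertible_det_nz by (metis diff_zero mat_0 poly_0)
  then have fin: "finite {z. poly (det N) z = 0}" by (rule poly_roots_finite)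
  have "{r::real. \<exists>v. v \<noteq> 0 \<and> M *v v = complex_of_real r *s v}
      \<subseteq> complex_of_real -` {z. poly (det N) z = 0}"
  proof
    fix r assume "r \<in> {r::real. \<exists>v. v \<noteq> 0 \<and> M *v v = complex_of_real r *s v}"
    then obtain v where v: "v \<noteq> 0" "M *v v = complex_of_real r *s v" by auto
    moreover have "mat z *v v = z *s v" for z :: complex
      by (simp add: vec_eq_iff matrix_vector_mult_def mat_def if_distrib[of "\<lambda>a. a * _"] cong: if_cong)
    ultimately have "(M - mat (complex_of_real r)) *v v = 0"
      by (simp add: matrix_vector_mult_diff_rdistrib)
    then have "\<not> invertible (M - mat (complex_of_real r))"
      using v(1) invertible_kernel_zero by blast
    then show "r \<in> complex_of_real -` {z. poly (det N) z = 0}"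
      using char_poly invertible_det_nz by auto
  qed
  moreover have "finite (complex_of_real -` {z. poly (det N) z = 0})"
    by (rule finite_vimageI[OF fin]) (simp add: inj_on_def)
  ultimately show ?thesis using finite_subset by blast
qed

text \<open>The (real part of the) form c^* M c on coefficient vectors; squared norms of elements
  of a finite span are of this shape.\<close>

definition quad_form :: "complex^'n^'n \<Rightarrow> complex^'n \<Rightarrow> real" where
  "quad_form M c = Re (\<Sum>j\<in>UNIV. cnj (c$j) * (M *v c)$j)"

lemma continuous_on_quad_form: "continuous_on S (quad_form M)"
  unfolding quad_form_def[abs_def] matrix_vector_mult_def by (intro continuous_intros)

lemma quad_form_eigen:
  assumes "M *v c = complex_of_real r *s (N *v c)"
  shows "quad_form M c = r * quad_form N c"
  unfolding quad_form_def assms by (simp add: sum_distrib_left algebra_simps)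


section \<open>Inner product spaces of functions\<close>

locale fun_inner_space =
  fixes H :: "('x \<Rightarrow> complex) set"
    and ip :: "('x \<Rightarrow> complex) \<Rightarrow> ('x \<Rightarrow> complex) \<Rightarrow> complex"
  assumes zero_in: "(\<lambda>t. 0) \<in> H"
    and add_in: "\<And>f g. f \<in> H \<Longrightarrow> g \<in> H \<Longrightarrow> (\<lambda>t. f t + g t) \<in> H"
    and scale_in: "\<And>c f. f \<in> H \<Longrightarrow> (\<lambda>t. c * f t) \<in> H"
    and ip_add: "\<And>f g h. f \<in> H \<Longrightarrow> g \<in> H \<Longrightarrow> h \<in> H \<Longrightarrow> ip (\<lambda>t. f t + g t) h = ip f h + ip g h"
    and ip_scale: "\<And>c f g. f \<in> H \<Longrightarrow> g \<in> H \<Longrightarrow> ip (\<lambda>t. c * f t) g = c * ip f g"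
    and ip_cnj: "\<And>f g. f \<in> H \<Longrightarrow> g \<in> H \<Longrightarrow> ip g f = cnj (ip f g)"
    and ip_self_nonneg: "\<And>f. f \<in> H \<Longrightarrow> 0 \<le> Re (ip f f)"
    and ip_self_eq_0: "\<And>f. f \<in> H \<Longrightarrow> ip f f = 0 \<Longrightarrow> f = (\<lambda>t. 0)"
begin

definition sqnorm :: "('x \<Rightarrow> complex) \<Rightarrow> real" where
  "sqnorm f = Re (ip f f)"

lemma add_scaled_in: "f \<in> H \<Longrightarrow> g \<in> H \<Longrightarrow> (\<lambda>t. f t + c * g t) \<in> H"
  using add_in[of f "\<lambda>t. c * g t"] scale_in by blast

lemma diff_in: "f \<in> H \<Longrightarrow> g \<in> H \<Longrightarrow> (\<lambda>t. f t - g t) \<in> H"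
  using add_scaled_in[of f g "-1"] by simp

lemma ip_add_scaled:
  "f \<in> H \<Longrightarrow> g \<in> H \<Longrightarrow> h \<in> H \<Longrightarrow> ip (\<lambda>t. f t + c * g t) h = ip f h + c * ip g h"
  using ip_add[of f "\<lambda>t. c * g t" h] scale_in ip_scale by simp

lemma ip_diff: "f \<in> H \<Longrightarrow> g \<in> H \<Longrightarrow> h \<in> H \<Longrightarrow> ip (\<lambda>t. f t - g t) h = ip f h - ip g h"
  using ip_add_scaled[of f g h "-1"] by simp

lemma ip_zero_left: "g \<in> H \<Longrightarrow> ip (\<lambda>t. 0) g = 0"
  using ip_scale[of g g 0] by simp

lemma ip_zero_right: "g \<in> H \<Longrightarrow> ip g (\<lambda>t. 0) = 0"
  using ip_cnj[of g "\<lambda>t. 0"] zero_in ip_zero_left by simp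

lemma ip_add_scaled_right:
  assumes f: "f \<in> H" and g: "g \<in> H" and h: "h \<in> H"
  shows "ip h (\<lambda>t. f t + c * g t) = ip h f + cnj c * ip h g"
proof -
  have "ip h (\<lambda>t. f t + c * g t) = cnj (ip (\<lambda>t. f t + c * g t) h)"
    using ip_cnj add_scaled_in f g h by blast
  also have "\<dots> = cnj (ip f h + c * ip g h)" using ip_add_scaled f g h by simp
  finally show ?thesis using ip_cnj[OF h f] ip_cnj[OF h g] by simp
qed

lemma ip_diff_right: "f \<in> H \<Longrightarrow> g \<in> H \<Longrightarrow> h \<in> H \<Longrightarrow> ip h (\<lambda>t. f t - g t) = ip h f - ip h g"
  using ip_add_scaled_right[of f g h "-1"] by simp

lemma ip_self: "f \<in> H \<Longrightarrow> ip f f = complex_of_real (sqnorm f)"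
  unfolding sqnorm_def using ip_cnj[of f f] by (metis Reals_cnj_iff complex_is_Real_iff of_real_Re)

lemma sqnorm_nonneg: "f \<in> H \<Longrightarrow> 0 \<le> sqnorm f"
  unfolding sqnorm_def using ip_self_nonneg by blast

lemma sqnorm_eq_0:
  assumes "f \<in> H"
  shows "sqnorm f = 0 \<longleftrightarrow> f = (\<lambda>t. 0)"
proof -
  have "sqnorm f = 0 \<longleftrightarrow> ip f f = 0" using ip_self[OF assms] by simp
  then show ?thesis using ip_self_eq_0 ip_zero_left zero_in assms by blast
qed

lemma sqnorm_add_scaled:
  assumes "f \<in> H" "g \<in> H"
  shows "sqnorm (\<lambda>t. f t + a * g t) = sqnorm f + 2 * Re (cnj a * ip f g) + (cmod a)^2 * sqnorm g"
proof -
  have "ip (\<lambda>t. f t + a * g t) (\<lambda>t. f t + a * g t)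
      = ip f f + cnj a * ip f g + cnj (cnj a * ip f g) + (a * cnj a) * ip g g"
    using assms add_scaled_in by (simp add: ip_add_scaled ip_add_scaled_right ip_cnj[of f g] algebra_simps)
  moreover have "a * cnj a = complex_of_real ((cmod a)^2)" using complex_norm_square[of a] by simp
  ultimately show ?thesis
    unfolding sqnorm_def using assms by (simp add: ip_self)
qed

lemma sqnorm_scale: "f \<in> H \<Longrightarrow> sqnorm (\<lambda>t. c * f t) = (cmod c)^2 * sqnorm f"
  using sqnorm_add_scaled[of "\<lambda>t. 0" f c] zero_in ip_zero_left by (simp add: sqnorm_def)

lemma sqnorm_diff:
  "f \<in> H \<Longrightarrow> g \<in> H \<Longrightarrow> sqnorm (\<lambda>t. f t - g t) = sqnorm f + sqnorm g - 2 * Re (ip f g)"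
  using sqnorm_add_scaled[of f g "-1"] by simp

text \<open>Cauchy-Schwarz, from |f + a g|^2 >= 0 with a = -(f,g)/|g|^2.\<close>

lemma cauchy_schwarz:
  assumes f: "f \<in> H" and g: "g \<in> H"
  shows "(cmod (ip f g))^2 \<le> sqnorm f * sqnorm g"
proof (cases "sqnorm g = 0")
  case True
  then show ?thesis using sqnorm_eq_0 g ip_zero_right f sqnorm_nonneg by simp
next
  case False
  then have gpos: "sqnorm g > 0" using sqnorm_nonneg g by force
  define a where "a = - ip f g / complex_of_real (sqnorm g)"
  have "cnj a * ip f g = - complex_of_real ((cmod (ip f g))^2 / sqnorm g)"
    unfolding a_def using complex_norm_square[of "ip f g"] by (simp add: mult.commute)
  then have "Re (cnj a * ip f g) = - ((cmod (ip f g))^2 / sqnorm g)" by simp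
  moreover have "(cmod a)^2 * sqnorm g = (cmod (ip f g))^2 / sqnorm g"
    unfolding a_def using gpos by (simp add: norm_divide power_divide power2_eq_square)
  ultimately have "sqnorm (\<lambda>t. f t + a * g t) = sqnorm f - (cmod (ip f g))^2 / sqnorm g"
    using sqnorm_add_scaled[OF f g, of a] by simp
  moreover have "0 \<le> sqnorm (\<lambda>t. f t + a * g t)" using sqnorm_nonneg add_scaled_in f g by blast
  ultimately show ?thesis using gpos by (simp add: field_simps) (smt (verit) mult_nonneg_nonneg)
qed

end


section \<open>Finite spans and orthogonal projections\<close>

definition lincomb :: "('i::finite \<Rightarrow> 'x \<Rightarrow> complex) \<Rightarrow> ('i \<Rightarrow> complex) \<Rightarrow> 'x \<Rightarrow> complex" where
  "lincomb g c = (\<lambda>t. \<Sum>i\<in>UNIV. c i * g i t)"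

lemma fspan_lincomb: "fspan g = range (lincomb g)"
  unfolding fspan_def lincomb_def by auto

lemma lincomb_add_scaled: "(\<lambda>t. lincomb g c t + s * lincomb g d t) = lincomb g (\<lambda>i. c i + s * d i)"
  unfolding lincomb_def by (simp add: sum.distrib sum_distrib_left algebra_simps)

lemma fspan_add_scaled:
  assumes "u \<in> fspan g" "w \<in> fspan g"
  shows "(\<lambda>t. u t + s * w t) \<in> fspan g"
proof -
  obtain c d where "u = lincomb g c" "w = lincomb g d" using assms unfolding fspan_lincomb by auto
  then have "(\<lambda>t. u t + s * w t) = lincomb g (\<lambda>i. c i + s * d i)" by (simp add: lincomb_add_scaled)
  then show ?thesis unfolding fspan_lincomb by blast
qed

lemma zero_in_fspan: "(\<lambda>t. 0) \<in> fspan g"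
proof -
  have "(\<lambda>t. 0) = lincomb g (\<lambda>i. 0)" by (simp add: lincomb_def)
  then show ?thesis unfolding fspan_lincomb by blast
qed

lemma fspan_scale: "w \<in> fspan g \<Longrightarrow> (\<lambda>t. s * w t) \<in> fspan g"
  using fspan_add_scaled[OF zero_in_fspan, of w g s] by simp

context fun_inner_space
begin

lemma sum_comb_in:
  assumes S: "finite S" and g: "\<forall>i. g i \<in> H"
  shows "(\<lambda>t. \<Sum>i\<in>S. c i * g i t) \<in> H"
  using S
proof (induction S rule: finite_induct)
  case empty then show ?case using zero_in by simp
next
  case (insert a S)
  then show ?case using add_scaled_in[OF insert.IH, of "g a" "c a"] g by (simp add: add.commute)
qed

lemma lincomb_in: "\<forall>i. g i \<in> H \<Longrightarrow> lincomb g c \<in> H"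
  unfolding lincomb_def by (rule sum_comb_in) simp_all

lemma fspan_in: "\<forall>i. g i \<in> H \<Longrightarrow> u \<in> fspan g \<Longrightarrow> u \<in> H"
  using lincomb_in unfolding fspan_lincomb by auto

lemma ip_lincomb:
  assumes g: "\<forall>i. g i \<in> H" and w: "w \<in> H"
  shows "ip (lincomb g c) w = (\<Sum>i\<in>UNIV. c i * ip (g i) w)"
proof -
  have "ip (\<lambda>t. \<Sum>i\<in>S. c i * g i t) w = (\<Sum>i\<in>S. c i * ip (g i) w)" if "finite S" for S
    using that
  proof (induction S rule: finite_induct)
    case empty then show ?case using ip_zero_left w by simp
  next
    case (insert a S)
    then show ?case using ip_add_scaled[OF sum_comb_in[OF insert.hyps(1) g, of c], of "g a" w "c a"] g w
      by (simp add: add.commute)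
  qed
  then show ?thesis unfolding lincomb_def by simp
qed

lemma ip_lincomb_right:
  assumes g: "\<forall>i. g i \<in> H" and w: "w \<in> H"
  shows "ip w (lincomb g c) = (\<Sum>i\<in>UNIV. cnj (c i) * ip w (g i))"
proof -
  have "ip w (lincomb g c) = cnj (ip (lincomb g c) w)" using ip_cnj lincomb_in g w by blast
  also have "\<dots> = (\<Sum>i\<in>UNIV. cnj (c i) * cnj (ip (g i) w))" using ip_lincomb[OF g w] by simp
  finally show ?thesis using ip_cnj[OF w] g by simp
qed

lemma orth_fspan:
  assumes g: "\<forall>i. g i \<in> H" and w: "w \<in> H" and orth: "\<forall>j. ip w (g j) = 0" and v: "v \<in> fspan g"
  shows "ip w v = 0" "ip v w = 0"
proof -
  obtain d where "v = lincomb g d" using v unfolding fspan_lincomb by auto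
  then show "ip w v = 0" using ip_lincomb_right[OF g w] orth by simp
  then show "ip v w = 0" using ip_cnj[OF w fspan_in[OF g v]] by simp
qed

definition is_proj :: "('i::finite \<Rightarrow> 'x \<Rightarrow> complex) \<Rightarrow> ('x \<Rightarrow> complex) \<Rightarrow> ('x \<Rightarrow> complex) \<Rightarrow> bool" where
  "is_proj g f u \<longleftrightarrow> u \<in> fspan g \<and> (\<forall>j. ip (\<lambda>t. f t - u t) (g j) = 0)"

definition admits_proj :: "('i::finite \<Rightarrow> 'x \<Rightarrow> complex) \<Rightarrow> bool" where
  "admits_proj g \<longleftrightarrow> (\<forall>i. g i \<in> H) \<and> (\<forall>f\<in>H. \<exists>u. is_proj g f u)"

abbreviation proj :: "('i::finite \<Rightarrow> 'x \<Rightarrow> complex) \<Rightarrow> ('x \<Rightarrow> complex) \<Rightarrow> ('x \<Rightarrow> complex)" where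
  "proj g \<equiv> hproj ip (fspan g)"

lemma is_proj_orth:
  assumes g: "\<forall>i. g i \<in> H" and f: "f \<in> H" and p: "is_proj g f u" and w: "w \<in> fspan g"
  shows "ip (\<lambda>t. f t - u t) w = 0" "ip w (\<lambda>t. f t - u t) = 0"
  using orth_fspan[OF g diff_in[OF f fspan_in[OF g]] _ w] p unfolding is_proj_def by auto

text \<open>Projections are unique, so hproj picks the one given by is_proj.\<close>

lemma hproj_eqI:
  assumes g: "\<forall>i. g i \<in> H" and f: "f \<in> H" and p: "is_proj g f u"
  shows "proj g f = u"
  unfolding hproj_def
proof (rule the_equality)
  show "u \<in> fspan g \<and> (\<forall>w\<in>fspan g. ip (\<lambda>t. f t - u t) w = 0)"
    using p is_proj_orth[OF g f p] unfolding is_proj_def by blast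
next
  fix u' assume u': "u' \<in> fspan g \<and> (\<forall>w\<in>fspan g. ip (\<lambda>t. f t - u' t) w = 0)"
  have uU: "u \<in> fspan g" using p unfolding is_proj_def by blast
  have uH: "u \<in> H" "u' \<in> H" using uU u' fspan_in[OF g] by auto
  define z where "z = (\<lambda>t. u t - u' t)"
  have zU: "z \<in> fspan g" using fspan_add_scaled[OF uU, of u' "-1"] u' unfolding z_def by simp
  have zH: "z \<in> H" unfolding z_def using diff_in uH by simp
  have "z = (\<lambda>t. (\<lambda>t. f t - u' t) t - (\<lambda>t. f t - u t) t)" unfolding z_def by simp
  then have "ip z z = ip (\<lambda>t. f t - u' t) z - ip (\<lambda>t. f t - u t) z"
    using ip_diff[OF diff_in[OF f uH(2)] diff_in[OF f uH(1)] zH] by simp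
  also have "\<dots> = 0" using u' zU is_proj_orth[OF g f p zU] by simp
  finally have "z = (\<lambda>t. 0)" using ip_self_eq_0 zH by blast
  then show "u' = u" unfolding z_def by (simp add: fun_eq_iff)
qed

lemma is_proj_proj:
  assumes "admits_proj g" "f \<in> H"
  shows "is_proj g f (proj g f)"
  using assms hproj_eqI unfolding admits_proj_def by metis

lemma proj_in_fspan: "admits_proj g \<Longrightarrow> f \<in> H \<Longrightarrow> proj g f \<in> fspan g"
  using is_proj_proj unfolding is_proj_def by blast

lemma proj_in: "admits_proj g \<Longrightarrow> f \<in> H \<Longrightarrow> proj g f \<in> H"
  using proj_in_fspan fspan_in unfolding admits_proj_def by blast

lemma proj_fixes:
  assumes g: "admits_proj g" and u: "u \<in> fspan g"
  shows "proj g u = u"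
proof -
  have gH: "\<forall>i. g i \<in> H" using g unfolding admits_proj_def by blast
  have "is_proj g u u" using u ip_zero_left gH unfolding is_proj_def by simp
  then show ?thesis using hproj_eqI[OF gH fspan_in[OF gH u]] by blast
qed

lemma proj_add_scaled:
  assumes g: "admits_proj g" and f: "f \<in> H" and f': "f' \<in> H"
  shows "proj g (\<lambda>t. f t + c * f' t) = (\<lambda>t. proj g f t + c * proj g f' t)"
proof -
  have gH: "\<forall>i. g i \<in> H" using g unfolding admits_proj_def by blast
  let ?u = "proj g f" and ?u' = "proj g f'"
  have "(\<lambda>t. (f t + c * f' t) - (?u t + c * ?u' t)) = (\<lambda>t. (f t - ?u t) + c * (f' t - ?u' t))"
    by (simp add: algebra_simps)
  moreover have "ip (\<lambda>t. (f t - ?u t) + c * (f' t - ?u' t)) (g j) = 0" for j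
    using ip_add_scaled[OF diff_in[OF f proj_in[OF g f]] diff_in[OF f' proj_in[OF g f']]] gH
      is_proj_proj[OF g f] is_proj_proj[OF g f'] unfolding is_proj_def by simp
  ultimately have "is_proj g (\<lambda>t. f t + c * f' t) (\<lambda>t. ?u t + c * ?u' t)"
    unfolding is_proj_def using fspan_add_scaled[OF proj_in_fspan[OF g f] proj_in_fspan[OF g f']] by simp
  then show ?thesis using hproj_eqI[OF gH add_scaled_in[OF f f']] by blast
qed

lemma proj_scale:
  assumes g: "admits_proj g" and f: "f \<in> H"
  shows "proj g (\<lambda>t. c * f t) = (\<lambda>t. c * proj g f t)"
proof -
  have "proj g (\<lambda>t. 0) = (\<lambda>t. 0)" by (rule proj_fixes[OF g zero_in_fspan])
  then show ?thesis using proj_add_scaled[OF g zero_in f, of c] by simp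
qed

lemma ip_proj_proj:
  assumes g: "admits_proj g" and f: "f \<in> H" and f': "f' \<in> H"
  shows "ip (proj g f) (proj g f') = ip (proj g f) f'"
proof -
  have gH: "\<forall>i. g i \<in> H" using g unfolding admits_proj_def by blast
  have "ip (proj g f) (\<lambda>t. f' t - proj g f' t) = 0"
    using is_proj_orth(2)[OF gH f' is_proj_proj[OF g f'] proj_in_fspan[OF g f]] .
  then show ?thesis using ip_diff_right[OF f' proj_in[OF g f'] proj_in[OF g f]] by simp
qed

lemma ip_proj:
  assumes g: "admits_proj g" and f: "f \<in> H"
  shows "ip f (proj g f) = complex_of_real (sqnorm (proj g f))"
proof -
  have "ip (proj g f) f = complex_of_real (sqnorm (proj g f))"
    using ip_proj_proj[OF g f f] ip_self[OF proj_in[OF g f]] by simp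
  then show ?thesis using ip_cnj[OF proj_in[OF g f] f] by simp
qed

lemma sqnorm_proj_residual:
  assumes g: "admits_proj g" and f: "f \<in> H"
  shows "sqnorm (\<lambda>t. f t - proj g f t) = sqnorm f - sqnorm (proj g f)"
  using sqnorm_diff[OF f proj_in[OF g f]] ip_proj[OF g f] by simp

lemma sqnorm_proj_le: "admits_proj g \<Longrightarrow> f \<in> H \<Longrightarrow> sqnorm (proj g f) \<le> sqnorm f"
  using sqnorm_proj_residual sqnorm_nonneg diff_in proj_in by (metis diff_ge_0_iff_ge)

end


section \<open>Principal-angle estimates for two finite spans\<close>

text \<open>Throughout, U = span g1 and V = span g2 with projections P_U = proj g1, P_V = proj g2.\<close>

lemma nonneg_quadratic_linear_coeff:
  fixes a b :: real
  assumes "\<And>s. 0 \<le> s * a + s^2 * b"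
  shows "a = 0"
proof (rule ccontr)
  assume a: "a \<noteq> 0"
  define B where "B = \<bar>b\<bar> + 1"
  have B: "B > 0" "b \<le> B - 1" unfolding B_def by auto
  define s where "s = - a / B"
  have "s * a + s^2 * b \<le> s * a + s^2 * (B - 1)"
    using B by (intro add_left_mono mult_left_mono) auto
  also have "\<dots> = (- (a^2) * B + a^2 * (B - 1)) / B^2"
    unfolding s_def using B by (simp add: power2_eq_square field_simps)
  also have "\<dots> = - (a^2) / B^2" by (simp add: algebra_simps)
  also have "\<dots> < 0" using a B by simp
  finally show False using assms[of s] by linarith
qed

context fun_inner_space
begin

text \<open>Every vector of span g1 keeps at least the fraction mu of its squared norm under
  projection onto span g2; i.e. mu bounds the squared cosines of the principal angles.\<close>

definition cos2_bound :: "real \<Rightarrow> ('i::finite \<Rightarrow> 'x \<Rightarrow> complex) \<Rightarrow> ('j::finite \<Rightarrow> 'x \<Rightarrow> complex) \<Rightarrow> bool" where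
  "cos2_bound mu g1 g2 \<longleftrightarrow> (\<forall>u\<in>fspan g1. mu * sqnorm u \<le> sqnorm (proj g2 u))"

lemma cos2_boundD: "cos2_bound mu g1 g2 \<Longrightarrow> u \<in> fspan g1 \<Longrightarrow> mu * sqnorm u \<le> sqnorm (proj g2 u)"
  unfolding cos2_bound_def by blast

lemma cos2_bound_zero:
  assumes g1: "admits_proj g1" and g2: "admits_proj g2"
  shows "cos2_bound 0 g1 g2"
  unfolding cos2_bound_def
proof
  fix u assume "u \<in> fspan g1"
  then have "u \<in> H" using fspan_in g1 unfolding admits_proj_def by blast
  then show "0 * sqnorm u \<le> sqnorm (proj g2 u)" using sqnorm_nonneg proj_in[OF g2] by simp
qed

text \<open>A vector w orthogonal to V keeps at most the fraction 1 - mu of its squared norm under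
  P_U: with p = P_U w one has (w, p - P_V p) = |p|^2, so Cauchy-Schwarz and
  |p - P_V p|^2 <= (1 - mu) |p|^2 give |p|^4 <= |w|^2 (1 - mu) |p|^2.\<close>

lemma sqnorm_proj_orth_le:
  assumes g1: "admits_proj g1" and g2: "admits_proj g2" and bound: "cos2_bound mu g1 g2"
    and mu: "mu \<le> 1" and w: "w \<in> H" and orth: "\<forall>v\<in>fspan g2. ip w v = 0"
  shows "sqnorm (proj g1 w) \<le> (1 - mu) * sqnorm w"
proof -
  define p where "p = proj g1 w"
  define r where "r = proj g2 p"
  have pU: "p \<in> fspan g1" and pH: "p \<in> H" unfolding p_def using proj_in_fspan proj_in g1 w by auto
  have rV: "r \<in> fspan g2" and rH: "r \<in> H" unfolding r_def using proj_in_fspan proj_in g2 pH by auto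
  have "ip w (\<lambda>t. p t - r t) = complex_of_real (sqnorm p)"
    using ip_diff_right[OF pH rH w] ip_proj[OF g1 w] orth rV unfolding p_def by simp
  then have "(sqnorm p)^2 \<le> sqnorm w * sqnorm (\<lambda>t. p t - r t)"
    using cauchy_schwarz[OF w diff_in[OF pH rH]] sqnorm_nonneg[OF pH] by simp
  also have "\<dots> \<le> sqnorm w * ((1 - mu) * sqnorm p)"
  proof (rule mult_left_mono)
    show "sqnorm (\<lambda>t. p t - r t) \<le> (1 - mu) * sqnorm p"
      using sqnorm_proj_residual[OF g2 pH] cos2_boundD[OF bound pU] unfolding r_def
      by (simp add: left_diff_distrib)
  qed (rule sqnorm_nonneg[OF w])
  finally have "sqnorm p * sqnorm p \<le> ((1 - mu) * sqnorm w) * sqnorm p"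
    by (simp add: power2_eq_square algebra_simps)
  moreover have "0 \<le> (1 - mu) * sqnorm w" using mu sqnorm_nonneg[OF w] by simp
  ultimately show ?thesis
    unfolding p_def[symmetric] using sqnorm_nonneg[OF pH]
    by (metis less_eq_real_def mult_right_le_imp_le mult_zero_left)
qed

text \<open>The main upper estimate: with cosine bounds in both directions,
  |P_U f - P_V f|^2 <= (1 - mu) |f|^2.  Writing P_U f - P_V f = p - q with
  p = P_U (f - P_V f) in U and q = P_V f - P_U P_V f orthogonal to U, both pieces are
  controlled by the cosine bounds, and |f - P_V f|^2 + |P_V f|^2 = |f|^2.\<close>

lemma sqnorm_proj_diff_le:
  assumes g1: "admits_proj g1" and g2: "admits_proj g2"
    and bound12: "cos2_bound mu g1 g2" and bound21: "cos2_bound mu g2 g1"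
    and mu: "mu \<le> 1" and f: "f \<in> H"
  shows "sqnorm (\<lambda>t. proj g1 f t - proj g2 f t) \<le> (1 - mu) * sqnorm f"
proof -
  have g1H: "\<forall>i. g1 i \<in> H" and g2H: "\<forall>i. g2 i \<in> H" using g1 g2 unfolding admits_proj_def by auto
  define b where "b = proj g2 f"
  define p where "p = proj g1 (\<lambda>t. f t - b t)"
  define q where "q = (\<lambda>t. b t - proj g1 b t)"
  have bV: "b \<in> fspan g2" and bH: "b \<in> H" unfolding b_def using proj_in_fspan proj_in g2 f by auto
  have fbH: "(\<lambda>t. f t - b t) \<in> H" using diff_in f bH by simp
  have pU: "p \<in> fspan g1" and pH: "p \<in> H" unfolding p_def using proj_in_fspan proj_in g1 fbH by auto
  have qH: "q \<in> H" unfolding q_def using diff_in[OF bH proj_in[OF g1 bH]] .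
  have "p = (\<lambda>t. proj g1 f t - proj g1 b t)"
    unfolding p_def using proj_add_scaled[OF g1 f bH, of "-1"] by simp
  then have split: "(\<lambda>t. proj g1 f t - proj g2 f t) = (\<lambda>t. p t - q t)"
    unfolding q_def b_def by (simp add: fun_eq_iff)
  have "ip q p = 0" unfolding q_def using is_proj_orth(1)[OF g1H bH is_proj_proj[OF g1 bH] pU] .
  then have "ip p q = 0" using ip_cnj[OF qH pH] by simp
  then have pq_sum: "sqnorm (\<lambda>t. p t - q t) = sqnorm p + sqnorm q" using sqnorm_diff[OF pH qH] by simp
  have p_bound: "sqnorm p \<le> (1 - mu) * sqnorm (\<lambda>t. f t - b t)"
    unfolding p_def using sqnorm_proj_orth_le[OF g1 g2 bound12 mu fbH]
      is_proj_orth(1)[OF g2H f is_proj_proj[OF g2 f]] unfolding b_def by blast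
  have q_bound: "sqnorm q \<le> (1 - mu) * sqnorm b"
    unfolding q_def using sqnorm_proj_residual[OF g1 bH] cos2_boundD[OF bound21 bV]
    by (simp add: algebra_simps)
  have "sqnorm (\<lambda>t. proj g1 f t - proj g2 f t) \<le> (1 - mu) * sqnorm (\<lambda>t. f t - b t) + (1 - mu) * sqnorm b"
    unfolding split using pq_sum p_bound q_bound by linarith
  also have "\<dots> = (1 - mu) * sqnorm f"
    using sqnorm_proj_residual[OF g2 f] unfolding b_def by (simp add: distrib_left[symmetric])
  finally show ?thesis .
qed

text \<open>If P_V maps span g1 onto span g2, a cosine bound from g1 to g2 transfers to the
  reverse direction: for v = P_V u we have |v|^2 = (v, u) = (P_U v, u), and Cauchy-Schwarz
  together with mu |u|^2 <= |v|^2 gives mu |v|^2 <= |P_U v|^2.\<close>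

lemma cos2_bound_transfer:
  assumes g1: "admits_proj g1" and g2: "admits_proj g2" and bound: "cos2_bound mu g1 g2"
    and onto: "\<forall>v\<in>fspan g2. \<exists>u\<in>fspan g1. proj g2 u = v"
  shows "cos2_bound mu g2 g1"
  unfolding cos2_bound_def
proof
  have g1H: "\<forall>i. g1 i \<in> H" and g2H: "\<forall>i. g2 i \<in> H" using g1 g2 unfolding admits_proj_def by auto
  fix v assume vV: "v \<in> fspan g2"
  obtain u where uU: "u \<in> fspan g1" and uv: "proj g2 u = v" using onto vV by blast
  have uH: "u \<in> H" and vH: "v \<in> H" using uU vV fspan_in g1H g2H by auto
  have Pv: "proj g1 v \<in> H" using proj_in[OF g1 vH] .
  have "ip v u = complex_of_real (sqnorm v)"
    using ip_proj[OF g2 uH] ip_cnj[OF uH vH] uv by simp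
  moreover have "ip v u = ip (proj g1 v) u"
    using is_proj_orth(1)[OF g1H vH is_proj_proj[OF g1 vH] uU] ip_diff[OF vH Pv uH] by simp
  ultimately have cs: "(sqnorm v)^2 \<le> sqnorm (proj g1 v) * sqnorm u"
    using cauchy_schwarz[OF Pv uH] sqnorm_nonneg[OF vH] by simp
  moreover have "mu * sqnorm u \<le> sqnorm v" using bound uU uv unfolding cos2_bound_def by blast
  ultimately have key: "(mu * sqnorm v) * sqnorm u \<le> sqnorm (proj g1 v) * sqnorm u"
    using sqnorm_nonneg[OF vH] by (smt (verit) mult.commute mult.left_commute mult_left_mono power2_eq_square)
  show "mu * sqnorm v \<le> sqnorm (proj g1 v)"
  proof (cases "sqnorm u = 0")
    case True
    then have "sqnorm v = 0" using cs by simp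
    then show ?thesis using sqnorm_nonneg[OF Pv] by simp
  next
    case False
    then have "sqnorm u > 0" using sqnorm_nonneg[OF uH] by simp
    then show ?thesis using key by simp
  qed
qed

definition rayleigh :: "('i::finite \<Rightarrow> 'x \<Rightarrow> complex) \<Rightarrow> ('x \<Rightarrow> complex) \<Rightarrow> real" where
  "rayleigh g u = sqnorm (proj g u) / sqnorm u"

lemma rayleigh_scale:
  assumes g: "admits_proj g" and u: "u \<in> H" and c: "c \<noteq> 0"
  shows "rayleigh g (\<lambda>t. c * u t) = rayleigh g u"
  unfolding rayleigh_def proj_scale[OF g u] sqnorm_scale[OF u] sqnorm_scale[OF proj_in[OF g u]]
  using c by simp

text \<open>Perturbing u0 by s c w for real s,
  the nonnegative quadratic |P_V(u0 + s c w)|^2 - mu |u0 + s c w|^2 has vanishing linear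
  coefficient; c = 1 and c = i give the real and imaginary parts.\<close>

lemma rayleigh_stationary:
  assumes g1: "admits_proj g1" and g2: "admits_proj g2" and bound: "cos2_bound mu g1 g2"
    and u0: "u0 \<in> fspan g1" and attained: "mu * sqnorm u0 = sqnorm (proj g2 u0)"
    and w: "w \<in> fspan g1"
  shows "ip (proj g2 u0) (proj g2 w) = complex_of_real mu * ip u0 w"
proof -
  have g1H: "\<forall>i. g1 i \<in> H" using g1 unfolding admits_proj_def by blast
  have u0H: "u0 \<in> H" and wH: "w \<in> H" using u0 w fspan_in[OF g1H] by auto
  have Pu0: "proj g2 u0 \<in> H" and Pw: "proj g2 w \<in> H" using proj_in[OF g2] u0H wH by auto
  have re: "Re (cnj c * ip (proj g2 u0) (proj g2 w)) = mu * Re (cnj c * ip u0 w)" for c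
  proof -
    have "0 \<le> s * (2 * (Re (cnj c * ip (proj g2 u0) (proj g2 w)) - mu * Re (cnj c * ip u0 w)))
            + s^2 * ((cmod c)^2 * (sqnorm (proj g2 w) - mu * sqnorm w))" for s
    proof -
      let ?a = "complex_of_real s * c"
      have "mu * sqnorm (\<lambda>t. u0 t + ?a * w t) \<le> sqnorm (proj g2 (\<lambda>t. u0 t + ?a * w t))"
        using cos2_boundD[OF bound fspan_add_scaled[OF u0 w]] .
      moreover have "cmod ?a ^ 2 = s^2 * (cmod c)^2" by (simp add: norm_mult power_mult_distrib)
      ultimately show ?thesis
        unfolding proj_add_scaled[OF g2 u0H wH] sqnorm_add_scaled[OF u0H wH]
          sqnorm_add_scaled[OF Pu0 Pw] using attained by (simp add: algebra_simps)
    qed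
    from nonneg_quadratic_linear_coeff[OF this] show ?thesis by simp
  qed
  show ?thesis
  proof (rule complex_eqI)
    show "Re (ip (proj g2 u0) (proj g2 w)) = Re (complex_of_real mu * ip u0 w)" using re[of 1] by simp
    show "Im (ip (proj g2 u0) (proj g2 w)) = Im (complex_of_real mu * ip u0 w)" using re[of \<i>] by simp
  qed
qed

lemma subdist_proj:
  "subdist H ip (fspan g1) (fspan g2)
     = Sup {sqrt (sqnorm (\<lambda>t. proj g1 f t - proj g2 f t)) | f. f \<in> H \<and> sqnorm f \<le> 1}"
  unfolding subdist_def hnorm_def sqnorm_def by simp

lemma subdist_le:
  assumes g1: "admits_proj g1" and g2: "admits_proj g2"
    and bound12: "cos2_bound mu g1 g2" and bound21: "cos2_bound mu g2 g1" and mu: "mu \<le> 1"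
  shows "subdist H ip (fspan g1) (fspan g2) \<le> sqrt (1 - mu)"
  unfolding subdist_proj
proof (rule cSup_least)
  show "{sqrt (sqnorm (\<lambda>t. proj g1 f t - proj g2 f t)) | f. f \<in> H \<and> sqnorm f \<le> 1} \<noteq> {}"
    using zero_in ip_zero_left unfolding sqnorm_def by fastforce
next
  fix y assume "y \<in> {sqrt (sqnorm (\<lambda>t. proj g1 f t - proj g2 f t)) | f. f \<in> H \<and> sqnorm f \<le> 1}"
  then obtain f where f: "f \<in> H" "sqnorm f \<le> 1" and y: "y = sqrt (sqnorm (\<lambda>t. proj g1 f t - proj g2 f t))"
    by blast
  have "sqnorm (\<lambda>t. proj g1 f t - proj g2 f t) \<le> (1 - mu) * sqnorm f"
    by (rule sqnorm_proj_diff_le[OF g1 g2 bound12 bound21 mu f(1)])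
  also have "\<dots> \<le> 1 - mu" using f(2) mu by (simp add: mult_left_le)
  finally show "y \<le> sqrt (1 - mu)" unfolding y by simp
qed

text \<open>Lower bound: the normalised vector u/|u| of span g1 is fixed by P_U and realises
  |P_U f - P_V f|^2 = 1 - rayleigh g2 u.  The supremum exists since |P_U - P_V| <= 1
  (the upper estimate with mu = 0).\<close>

lemma subdist_ge:
  assumes g1: "admits_proj g1" and g2: "admits_proj g2"
    and u: "u \<in> fspan g1" and u0: "u \<noteq> (\<lambda>t. 0)"
  shows "sqrt (1 - rayleigh g2 u) \<le> subdist H ip (fspan g1) (fspan g2)"
  unfolding subdist_proj
proof (rule cSup_upper)
  let ?D = "{sqrt (sqnorm (\<lambda>t. proj g1 f t - proj g2 f t)) | f. f \<in> H \<and> sqnorm f \<le> 1}"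
  have g1H: "\<forall>i. g1 i \<in> H" using g1 unfolding admits_proj_def by blast
  have uH: "u \<in> H" using fspan_in[OF g1H u] .
  have upos: "sqnorm u > 0" using sqnorm_nonneg[OF uH] sqnorm_eq_0[OF uH] u0 by force
  define c where "c = complex_of_real (1 / sqrt (sqnorm u))"
  define f where "f = (\<lambda>t. c * u t)"
  have fH: "f \<in> H" unfolding f_def using scale_in uH by blast
  have c2: "(cmod c)^2 = 1 / sqnorm u" unfolding c_def norm_of_real using upos by (simp add: power_divide)
  have nf: "sqnorm f = 1" unfolding f_def sqnorm_scale[OF uH] c2 using upos by simp
  have "proj g1 f = f" unfolding f_def using proj_fixes[OF g1 fspan_scale[OF u]] .
  moreover have "sqnorm (proj g2 f) = rayleigh g2 u"
    unfolding f_def proj_scale[OF g2 uH] sqnorm_scale[OF proj_in[OF g2 uH]] c2 rayleigh_def by simp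
  ultimately have "sqnorm (\<lambda>t. proj g1 f t - proj g2 f t) = 1 - rayleigh g2 u"
    using sqnorm_proj_residual[OF g2 fH] nf by simp
  then show "sqrt (1 - rayleigh g2 u) \<in> ?D" using fH nf by force
  show "bdd_above ?D"
  proof (rule bdd_aboveI)
    fix y assume "y \<in> ?D"
    then obtain f where f: "f \<in> H" "sqnorm f \<le> 1" and y: "y = sqrt (sqnorm (\<lambda>t. proj g1 f t - proj g2 f t))"
      by blast
    have "sqnorm (\<lambda>t. proj g1 f t - proj g2 f t) \<le> 1"
      using sqnorm_proj_diff_le[OF g1 g2 cos2_bound_zero[OF g1 g2] cos2_bound_zero[OF g2 g1] _ f(1)] f(2)
      by simp
    then show "y \<le> 1" unfolding y by simp
  qed
qed

end


section \<open>The kernel setting\<close>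

text \<open>U is spanned by the kernel sections kx j = K(x_j,.), V by the orthonormal family e.\<close>

locale kernel_setting = fun_inner_space H ip
  for H :: "('x \<Rightarrow> complex) set" and ip +
  fixes K :: "'x \<Rightarrow> 'x \<Rightarrow> complex" and x :: "'n::finite \<Rightarrow> 'x" and e :: "'n \<Rightarrow> 'x \<Rightarrow> complex"
  assumes K_in: "\<And>y. K y \<in> H"
    and reproducing: "\<And>f y. f \<in> H \<Longrightarrow> f y = ip f (K y)"
    and e_in: "\<And>k. e k \<in> H"
    and e_orthonormal: "\<And>j k. ip (e j) (e k) = (if j = k then 1 else 0)"
    and Kmat_invertible: "invertible (\<chi> j k. K (x j) (x k))"
begin

abbreviation kx :: "'n \<Rightarrow> 'x \<Rightarrow> complex" where
  "kx \<equiv> \<lambda>j. K (x j)"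

definition Kmat :: "complex^'n^'n" where
  "Kmat = (\<chi> j k. K (x j) (x k))"

definition Emat :: "complex^'n^'n" where
  "Emat = (\<chi> j k. e k (x j))"

definition Eadj :: "complex^'n^'n" where
  "Eadj = cnj_transpose Emat"

definition kcomb :: "complex^'n \<Rightarrow> 'x \<Rightarrow> complex" where
  "kcomb c = lincomb kx (\<lambda>i. c$i)"

lemma kx_in: "\<forall>j. kx j \<in> H" and e_all_in: "\<forall>k. e k \<in> H"
  using K_in e_in by auto

lemma Kmat_transpose_invertible: "invertible (transpose Kmat)"
  using Kmat_invertible unfolding Kmat_def by (rule invertible_transpose)

lemma kcomb_in: "kcomb c \<in> H"
  unfolding kcomb_def by (rule lincomb_in[OF kx_in])

lemma fspan_kx: "fspan kx = range kcomb"
proof -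
  have "lincomb kx d = kcomb (vec_lambda d)" for d unfolding kcomb_def by (simp add: vec_lambda_inverse)
  then show ?thesis unfolding fspan_lincomb kcomb_def by auto
qed

text \<open>By the reproducing property all inner products among the generators are point values.\<close>

lemma ip_kcomb_kx: "ip (kcomb c) (kx j) = (transpose Kmat *v c)$j"
  unfolding kcomb_def using ip_lincomb[OF kx_in K_in] reproducing[OF K_in]
  by (simp add: Kmat_def transpose_def matrix_vector_mult_def mult.commute)

lemma ip_kcomb_e: "ip (kcomb c) (e k) = (Eadj *v c)$k"
proof -
  have "ip (kx j) (e k) = cnj (e k (x j))" for j
    using ip_cnj[OF e_in K_in] reproducing[OF e_in] by simp
  then show ?thesis unfolding kcomb_def using ip_lincomb[OF kx_in e_in]
    by (simp add: Eadj_def Emat_def cnj_transpose_def matrix_vector_mult_def mult.commute)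
qed

lemma ip_lincomb_e: "ip (lincomb e d) (e k) = d k"
  using ip_lincomb[OF e_all_in e_in] by (simp add: e_orthonormal if_distrib sum.delta cong: if_cong)

lemma ip_lincomb_e_kx: "ip (lincomb e d) (kx j) = (Emat *v vec_lambda d)$j"
  using ip_lincomb[OF e_all_in K_in] reproducing[OF e_in]
  by (simp add: Emat_def matrix_vector_mult_def mult.commute)

text \<open>Both spans admit explicit orthogonal projections: onto V via the Fourier coefficients,
  onto U by solving the Gram system K[X]^T c = ((f, kx j))_j.\<close>

lemma is_proj_e: "f \<in> H \<Longrightarrow> is_proj e f (lincomb e (\<lambda>k. ip f (e k)))"
  unfolding is_proj_def fspan_lincomb
  using ip_diff[OF _ lincomb_in[OF e_all_in] e_in] ip_lincomb_e by simp

lemma admits_proj_e: "admits_proj e"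
  unfolding admits_proj_def using e_all_in is_proj_e by blast

lemma admits_proj_kx: "admits_proj kx"
  unfolding admits_proj_def
proof (intro conjI kx_in ballI)
  fix f assume f: "f \<in> H"
  define c where "c = matrix_inv (transpose Kmat) *v (\<chi> j. ip f (kx j))"
  have "ip (kcomb c) (kx j) = ip f (kx j)" for j
    unfolding ip_kcomb_kx c_def by (simp add: matrix_vector_mul_assoc matrix_inv_inverse(1)[OF Kmat_transpose_invertible])
  then have "is_proj kx f (kcomb c)"
    unfolding is_proj_def fspan_kx using ip_diff[OF f kcomb_in K_in] by simp
  then show "\<exists>u. is_proj kx f u" by blast
qed

lemma proj_e_kcomb: "proj e (kcomb c) = lincomb e (\<lambda>k. (Eadj *v c)$k)"
  using hproj_eqI[OF e_all_in kcomb_in is_proj_e[OF kcomb_in]] unfolding ip_kcomb_e .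

lemma kcomb_scale: "kcomb (r *\<^sub>R c) = (\<lambda>t. complex_of_real r * kcomb c t)"
  unfolding kcomb_def lincomb_def vector_scaleR_component
  by (simp add: scaleR_conv_of_real sum_distrib_left algebra_simps)

lemma sqnorm_kcomb: "sqnorm (kcomb c) = quad_form (transpose Kmat) c"
  unfolding sqnorm_def quad_form_def
  using ip_lincomb_right[OF kx_in kcomb_in[of c], of "\<lambda>i. c$i"] unfolding kcomb_def[symmetric] ip_kcomb_kx
  by simp

lemma sqnorm_proj_e_kcomb: "sqnorm (proj e (kcomb c)) = quad_form (Emat ** Eadj) c"
proof -
  have "ip (proj e (kcomb c)) (proj e (kcomb c)) = ip (proj e (kcomb c)) (kcomb c)"
    by (rule ip_proj_proj[OF admits_proj_e kcomb_in kcomb_in])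
  also have "\<dots> = (\<Sum>j\<in>UNIV. cnj (c$j) * ((Emat ** Eadj) *v c)$j)"
    using ip_lincomb_right[OF kx_in proj_in[OF admits_proj_e kcomb_in[of c]], of "\<lambda>i. c$i"]
    unfolding kcomb_def[symmetric] proj_e_kcomb ip_lincomb_e_kx
    by (simp add: matrix_vector_mul_assoc[symmetric])
  finally show ?thesis unfolding sqnorm_def quad_form_def by simp
qed

lemma kcomb_eq_0: "kcomb c = (\<lambda>t. 0) \<Longrightarrow> c = 0"
proof -
  assume "kcomb c = (\<lambda>t. 0)"
  then have "(transpose Kmat *v c)$j = 0" for j using ip_kcomb_kx ip_zero_left K_in by metis
  then have "transpose Kmat *v c = 0" by (simp add: vec_eq_iff)
  then show "c = 0" using invertible_kernel_zero[OF Kmat_transpose_invertible] by blast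
qed

lemma proj_e_kcomb_eq_0: "proj e (kcomb c) = (\<lambda>t. 0) \<longleftrightarrow> Eadj *v c = 0"
proof
  assume "proj e (kcomb c) = (\<lambda>t. 0)"
  then have "(Eadj *v c)$k = 0" for k
    using ip_lincomb_e[of "\<lambda>k. (Eadj *v c)$k" k] ip_zero_left e_in unfolding proj_e_kcomb by metis
  then show "Eadj *v c = 0" by (simp add: vec_eq_iff)
qed (simp add: proj_e_kcomb lincomb_def)

end


section \<open>The minimal Rayleigh quotient and its eigenvalue characterisation\<close>

context kernel_setting
begin

lemma kcomb_nonzero_sqnorm_pos: "c \<noteq> 0 \<Longrightarrow> sqnorm (kcomb c) > 0"
  using sqnorm_nonneg[OF kcomb_in] sqnorm_eq_0[OF kcomb_in] kcomb_eq_0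
  by (metis less_eq_real_def)

text \<open>The Rayleigh quotient of P_V attains its minimum on U \ {0}: it is scale invariant, and
  on the unit sphere of coefficient vectors it is a continuous quotient of Hermitian forms
  with positive denominator.\<close>

lemma rayleigh_minimizer:
  "\<exists>u0\<in>fspan kx. u0 \<noteq> (\<lambda>t. 0) \<and> cos2_bound (rayleigh e u0) kx e"
proof -
  have rq: "rayleigh e (kcomb c) = quad_form (Emat ** Eadj) c / quad_form (transpose Kmat) c" for c
    unfolding rayleigh_def sqnorm_kcomb sqnorm_proj_e_kcomb ..
  have "continuous_on (sphere 0 1) (\<lambda>c. quad_form (Emat ** Eadj) c / quad_form (transpose Kmat) c)"
    using kcomb_nonzero_sqnorm_pos unfolding sqnorm_kcomb
    by (intro continuous_intros continuous_on_quad_form) (auto, metis less_irrefl norm_zero zero_neq_one)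
  from continuous_attains_inf[OF compact_sphere _ this]
  obtain c0 :: "complex^'n" where c0: "norm c0 = 1"
    and min: "\<And>c. norm c = 1 \<Longrightarrow> rayleigh e (kcomb c0) \<le> rayleigh e (kcomb c)"
    unfolding rq by auto
  have c0_nz: "c0 \<noteq> 0" using c0 by auto
  have "rayleigh e (kcomb c0) * sqnorm u \<le> sqnorm (proj e u)" if "u \<in> fspan kx" for u
  proof -
    obtain c where u: "u = kcomb c" using \<open>u \<in> fspan kx\<close> unfolding fspan_kx by auto
    show ?thesis
    proof (cases "c = 0")
      case True
      then have "u = (\<lambda>t. 0)" unfolding u kcomb_def lincomb_def by simp
      then show ?thesis using sqnorm_nonneg[OF proj_in[OF admits_proj_e zero_in]] sqnorm_eq_0[OF zero_in]
        by simp
    next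
      case False
      have "rayleigh e (kcomb c0) \<le> rayleigh e (kcomb ((1 / norm c) *\<^sub>R c))"
        using min False by simp
      also have "\<dots> = rayleigh e u"
        unfolding kcomb_scale u by (rule rayleigh_scale[OF admits_proj_e kcomb_in]) (use False in simp)
      finally show ?thesis
        using kcomb_nonzero_sqnorm_pos[OF False] unfolding u rayleigh_def by (simp add: field_simps)
    qed
  qed
  moreover have "kcomb c0 \<noteq> (\<lambda>t. 0)" using kcomb_eq_0 c0_nz by blast
  ultimately show ?thesis unfolding cos2_bound_def fspan_kx by blast
qed

text \<open>umin is a minimiser and mu the minimal Rayleigh quotient, i.e. the squared cosine of
  the largest principal angle between U and V.\<close>

definition umin :: "'x \<Rightarrow> complex" where
  "umin = (SOME u0. u0 \<in> fspan kx \<and> u0 \<noteq> (\<lambda>t. 0) \<and> cos2_bound (rayleigh e u0) kx e)"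

definition mu :: real where
  "mu = rayleigh e umin"

lemma umin: "umin \<in> fspan kx" "umin \<noteq> (\<lambda>t. 0)" and mu_bound: "cos2_bound mu kx e"
  using someI_ex[OF rayleigh_minimizer[unfolded Bex_def]] unfolding umin_def[symmetric] mu_def by auto

lemma sqnorm_umin_pos: "sqnorm umin > 0"
  using umin fspan_in[OF kx_in] sqnorm_nonneg sqnorm_eq_0 by (metis less_eq_real_def)

lemma mu_attained: "mu * sqnorm umin = sqnorm (proj e umin)"
  unfolding mu_def rayleigh_def using sqnorm_umin_pos by simp

lemma mu_nonneg: "0 \<le> mu"
  unfolding mu_def rayleigh_def
  using sqnorm_nonneg[OF proj_in[OF admits_proj_e fspan_in[OF kx_in umin(1)]]] sqnorm_umin_pos by simp

lemma mu_le_1: "mu \<le> 1"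
  unfolding mu_def rayleigh_def
  using sqnorm_proj_le[OF admits_proj_e fspan_in[OF kx_in umin(1)]] sqnorm_umin_pos by simp

text \<open>Stationarity of the minimiser, tested against the kernel sections, is the generalised
  eigenvalue equation (E E^* ) c = mu K[X]^T c for the coefficient vector c of umin.\<close>

lemma generalized_eigen:
  assumes c: "kcomb c = umin"
  shows "(Emat ** Eadj) *v c = complex_of_real mu *s (transpose Kmat *v c)"
proof -
  have "((Emat ** Eadj) *v c)$j = mu * (transpose Kmat *v c)$j" for j
  proof -
    have "(axis j 1)$i * kx i t = (if i = j then kx j t else 0)" for i t
      unfolding axis_def by simp
    then have "kx j = kcomb (axis j 1)" unfolding kcomb_def lincomb_def by (simp add: fun_eq_iff)
    then have kxj: "kx j \<in> fspan kx" unfolding fspan_kx by blast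
    have "((Emat ** Eadj) *v c)$j = ip (proj e umin) (kx j)"
      unfolding c[symmetric] proj_e_kcomb ip_lincomb_e_kx by (simp add: matrix_vector_mul_assoc[symmetric])
    also have "\<dots> = ip (proj e umin) (proj e (kx j))"
      using ip_proj_proj[OF admits_proj_e fspan_in[OF kx_in umin(1)] K_in] by simp
    also have "\<dots> = mu * ip umin (kx j)"
      by (rule rayleigh_stationary[OF admits_proj_kx admits_proj_e mu_bound umin(1) mu_attained kxj])
    finally show ?thesis unfolding c[symmetric] ip_kcomb_kx .
  qed
  then show ?thesis by (simp add: vec_eq_iff)
qed

lemma singular_orthogonal:
  assumes "\<not> invertible Emat"
  obtains u where "u \<in> fspan kx" "u \<noteq> (\<lambda>t. 0)" "proj e u = (\<lambda>t. 0)"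
proof -
  have "\<not> invertible Eadj" using assms invertible_cnj_transpose_iff unfolding Eadj_def by blast
  then obtain c where "c \<noteq> 0" "Eadj *v c = 0" by (rule singular_kernel_nonzero)
  then show ?thesis using that[of "kcomb c"] kcomb_eq_0 proj_e_kcomb_eq_0 unfolding fspan_kx by blast
qed

text \<open>If E is invertible, P_V maps U onto V (the coefficient map is E^* ).\<close>

lemma proj_e_onto:
  assumes E: "invertible Emat"
  shows "\<forall>v\<in>fspan e. \<exists>u\<in>fspan kx. proj e u = v"
proof
  fix v assume "v \<in> fspan e"
  then obtain d where v: "v = lincomb e d" unfolding fspan_lincomb by auto
  have Eadj: "invertible Eadj" using E invertible_cnj_transpose unfolding Eadj_def by blast
  define c where "c = matrix_inv Eadj *v vec_lambda d"
  have "Eadj *v c = vec_lambda d"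
    unfolding c_def by (simp add: matrix_vector_mul_assoc matrix_inv_inverse(1)[OF Eadj])
  then have "proj e (kcomb c) = v" unfolding proj_e_kcomb v by (simp add: vec_lambda_inverse)
  then show "\<exists>u\<in>fspan kx. proj e u = v" unfolding fspan_kx by blast
qed

text \<open>For invertible E, 1/mu is the largest real eigenvalue of K[X]^T (E E^* )^-1:
  it is attained at (E E^* ) c for the coefficients c of umin, and an eigenvalue r with
  eigenvector (E E^* ) c gives |kcomb c|^2 = r |P_V kcomb c|^2 >= r mu |kcomb c|^2.\<close>

lemma lambda_max_eq:
  assumes E: "invertible Emat"
  shows "lambda_max (transpose Kmat ** matrix_inv (Emat ** Eadj)) = 1 / mu"
proof -
  let ?A = "Emat ** Eadj" and ?M = "transpose Kmat ** matrix_inv (Emat ** Eadj)"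
  have A: "invertible ?A"
    using invertible_mult E invertible_cnj_transpose unfolding Eadj_def by blast
  obtain c where c: "kcomb c = umin" using umin(1) unfolding fspan_kx by auto
  have c_nz: "c \<noteq> 0" using c umin(2) unfolding kcomb_def lincomb_def by auto
  have Ac_nz: "?A *v c \<noteq> 0" using invertible_kernel_zero[OF A] c_nz by blast
  have "mu \<noteq> 0" using generalized_eigen[OF c] Ac_nz by auto
  then have mu_pos: "mu > 0" using mu_nonneg by simp
  have attained: "?M *v (?A *v c) = complex_of_real (1 / mu) *s (?A *v c)"
  proof -
    have "?M *v (?A *v c) = transpose Kmat *v c"
      by (simp add: matrix_vector_mul_assoc matrix_inv_inverse(2)[OF A] flip: matrix_mul_assoc)
    then show ?thesis using mu_pos by (simp add: generalized_eigen[OF c])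
  qed
  have bound: "r \<le> 1 / mu" if v: "v \<noteq> 0" "?M *v v = complex_of_real r *s v" for r v
  proof -
    define d where "d = matrix_inv ?A *v v"
    have Ad: "?A *v d = v" unfolding d_def by (simp add: matrix_vector_mul_assoc matrix_inv_inverse(1)[OF A])
    then have d_nz: "d \<noteq> 0" using v by auto
    have "?M *v v = transpose Kmat *v d" unfolding d_def by (simp add: matrix_vector_mul_assoc)
    then have "transpose Kmat *v d = complex_of_real r *s (?A *v d)" using v(2) Ad by simp
    then have eq: "sqnorm (kcomb d) = r * sqnorm (proj e (kcomb d))"
      unfolding sqnorm_kcomb sqnorm_proj_e_kcomb by (rule quad_form_eigen)
    have "Eadj *v d \<noteq> 0"
      using d_nz invertible_kernel_zero invertible_cnj_transpose E unfolding Eadj_def by blast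
    then have "sqnorm (proj e (kcomb d)) > 0"
      using proj_e_kcomb_eq_0 sqnorm_eq_0 sqnorm_nonneg proj_in[OF admits_proj_e kcomb_in]
      by (metis less_eq_real_def)
    moreover have "mu * sqnorm (kcomb d) \<le> sqnorm (proj e (kcomb d))"
      using cos2_boundD[OF mu_bound] unfolding fspan_kx by blast
    ultimately have "mu * r \<le> 1" unfolding eq by (simp add: mult.assoc[symmetric])
    then show ?thesis using mu_pos by (simp add: field_simps mult.commute)
  qed
  have M: "invertible ?M"
    using invertible_mult[OF Kmat_transpose_invertible invertible_matrix_inv[OF A]] .
  show ?thesis unfolding lambda_max_def
    using finite_real_eigenvalues[OF M] attained Ac_nz bound by (intro Max_eqI) auto
qed

end


theorem lemma4p2:
  fixes K :: "'x::metric_space \<Rightarrow> 'x \<Rightarrow> complex"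
    and H :: "('x \<Rightarrow> complex) set"
    and ip :: "('x \<Rightarrow> complex) \<Rightarrow> ('x \<Rightarrow> complex) \<Rightarrow> complex"
    and \<Omega> :: "'x set" and M :: "'x measure"
    and e :: "'n::finite \<Rightarrow> 'x \<Rightarrow> complex" and lam :: "'n \<Rightarrow> real"
    and x :: "'n \<Rightarrow> 'x"
    and f h :: "'n \<Rightarrow> 'x \<Rightarrow> complex"
    and KX A B E :: "complex^'n^'n"
  assumes rk: "rkhs H ip K"
    and cpt: "compact \<Omega>"
    and cont: "continuous_on (\<Omega> \<times> \<Omega>) (\<lambda>(s, t). K s t)"
    and M_space: "space M = \<Omega>"
    and M_sets: "sets M = sets (restrict_space borel \<Omega>)"
    and M_fin: "finite_measure M"
    and e_H: "\<And>k. e k \<in> H"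
    and e_eig: "\<And>k. Top M K (e k) = (\<lambda>s. complex_of_real (lam k) * e k s)"
    and e_on: "\<And>j k. ip (e j) (e k) = (if j = k then 1 else 0)"
    and lam_pos: "\<And>k. lam k > 0"
    and lam_top: "\<And>g l k. g \<in> H \<Longrightarrow> g \<noteq> (\<lambda>s. 0) \<Longrightarrow> (\<forall>k'. ip g (e k') = 0)
                    \<Longrightarrow> Top M K g = (\<lambda>s. complex_of_real l * g s) \<Longrightarrow> l \<le> lam k"
    and KX_def: "KX = (\<chi> j k. K (x j) (x k))"
    and KX_inv: "invertible KX"
    and f_def: "\<And>j. f j = (\<lambda>s. \<Sum>k\<in>UNIV. cnj (e k (x j)) * e k s)"
    and h_def: "\<And>j. h j = (\<lambda>s. K (x j) s - f j s)"
    and A_def: "A = (\<chi> j k. ip (f k) (f j))"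
    and B_def: "B = (\<chi> j k. ip (h k) (h j))"
    and E_def: "E = (\<chi> j k. e k (x j))"
    and B_inv: "invertible B"
  shows "(invertible E \<longrightarrow>
           subdist H ip (fspan (\<lambda>j. K (x j))) (fspan e)
             = sqrt (1 - 1 / lambda_max (transpose KX ** matrix_inv (E ** cnj_transpose E))))
       \<and> (\<not> invertible E \<longrightarrow> subdist H ip (fspan (\<lambda>j. K (x j))) (fspan e) \<ge> 1)"
proof -
  interpret kernel_setting H ip K x e
    using rk e_H e_on KX_inv unfolding KX_def rkhs_def kernel_setting_def
      kernel_setting_axioms_def fun_inner_space_def by blast
  have E: "E = Emat" and KX: "KX = Kmat" unfolding E_def Emat_def KX_def Kmat_def by simp_all
  show ?thesis
  proof (intro conjI impI)
    assume "invertible E"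
    then have Einv: "invertible Emat" unfolding E .
    have "subdist H ip (fspan kx) (fspan e) \<le> sqrt (1 - mu)"
      using subdist_le[OF admits_proj_kx admits_proj_e mu_bound _ mu_le_1]
        cos2_bound_transfer[OF admits_proj_kx admits_proj_e mu_bound proj_e_onto[OF Einv]] by blast
    moreover have "sqrt (1 - mu) \<le> subdist H ip (fspan kx) (fspan e)"
      using subdist_ge[OF admits_proj_kx admits_proj_e umin] unfolding mu_def .
    ultimately show "subdist H ip (fspan kx) (fspan e)
        = sqrt (1 - 1 / lambda_max (transpose KX ** matrix_inv (E ** cnj_transpose E)))"
      unfolding E KX Eadj_def[symmetric] lambda_max_eq[OF Einv] by simp
  next
    assume "\<not> invertible E"
    then obtain u where u: "u \<in> fspan kx" "u \<noteq> (\<lambda>t. 0)" "proj e u = (\<lambda>t. 0)"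
      using singular_orthogonal unfolding E by blast
    have "rayleigh e u = 0" unfolding rayleigh_def u(3) sqnorm_def using ip_zero_left zero_in by simp
    then show "subdist H ip (fspan kx) (fspan e) \<ge> 1"
      using subdist_ge[OF admits_proj_kx admits_proj_e u(1,2)] by simp
  qed
qed

end
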